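(* Let $\Gamma$ be a group. For every finite symmetric subset $S\subseteq\Gamma$ we have $N'(\mathbf{1}_S)=e(\Gamma,S)\,|S|$.
   Context: For $f\colon\Gamma\to\mathbf{C}$, $N'(f)=\sup_F\frac1{|F|}\sum_{a,b\in F}|f(a^{-1}b)|$, the supremum over all non-empty finite $F\subseteq\Gamma$. $\mathrm{Cay}(\Gamma,S)$ is the graph with vertex set $\Gamma$ and an edge between $g$ and $gs$ for each $s\in S$; $\partial_SF$ is the set of edges joining a finite set $F$ to its complement; $h(\Gamma,S)=\inf_F|\partial_SF|/|F|$ over non-empty finite $F$; $e(\Gamma,S)=1-h(\Gamma,S)/|S|$. *)

theory Defs
  imports "HOL-Analysis.Analysis"
begin

text \<open>The group Gamma is an arbitrary (not necessarily abelian) group, rendered as a type of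
  class group_add; the group product a b is written a + b and a^-1 is written - a.\<close>

definition Nprime :: "('a::group_add \<Rightarrow> complex) \<Rightarrow> ereal" where
  "Nprime f = (SUP F \<in> {F. finite F \<and> F \<noteq> {}}.
      ereal ((1 / real (card F)) * (\<Sum>a\<in>F. \<Sum>b\<in>F. cmod (f (- a + b)))))"

definition cay_boundary :: "'a::group_add set \<Rightarrow> 'a set \<Rightarrow> 'a set set" where
  "cay_boundary S F = {{g, g + s} | g s. s \<in> S \<and>
      ((g \<in> F \<and> g + s \<notin> F) \<or> (g \<notin> F \<and> g + s \<in> F))}"

definition cheeger :: "'a::group_add set \<Rightarrow> real" where
  "cheeger S = (INF F \<in> {F. finite F \<and> F \<noteq> {}}. real (card (cay_boundary S F)) / real (card F))"

definition expansion :: "'a::group_add set \<Rightarrow> real" where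
  "expansion S = 1 - cheeger S / real (card S)"

definition symmetric_set :: "'a::group_add set \<Rightarrow> bool" where
  "symmetric_set S \<longleftrightarrow> (\<forall>s\<in>S. - s \<in> S)"

end

theory Submission
  imports Defs
begin

text \<open>For a finite non-empty F the average in the definition of N' counts, for each a in F,
  the generators s with a s in F; the remaining generators at a are exactly the boundary edges
  leaving a, and symmetry of S makes every boundary edge leave F at exactly one such pair (a, s).
  Hence the average equals |S| - |\<partial>S F| / |F|, and taking the supremum over F turns the
  infimum defining h(\<Gamma>, S) into |S| - h(\<Gamma>, S) = e(\<Gamma>, S) |S|.\<close>

lemma ereal_cSUP:
  fixes f :: "'b \<Rightarrow> real"
  assumes "A \<noteq> {}" and "bdd_above (f ` A)"
  shows "ereal (SUP a\<in>A. f a) = (SUP a\<in>A. ereal (f a))"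
  using continuous_at_Sup_mono[of ereal "f ` A"] assms
  by (simp add: image_comp mono_def continuous_at_imp_continuous_at_within continuous_at_ereal)

lemma cSUP_const_minus:
  fixes f :: "'b \<Rightarrow> real"
  assumes "A \<noteq> {}" and "bdd_below (f ` A)"
  shows "(SUP a\<in>A. c - f a) = c - (INF a\<in>A. f a)"
proof -
  have "bdd_above ((\<lambda>a. - f a) ` A)"
    using assms(2) by (simp add: bdd_above_uminus_image)
  then have "(SUP a\<in>A. c + - f a) = c + (SUP a\<in>A. - f a)"
    using Sup_add_eq assms(1) by blast
  also have "\<dots> = c - (INF a\<in>A. f a)"
    using uminus_cINF[OF assms(2,1)] by simp
  finally show ?thesis by simp
qed

lemma card_cay_boundary:
  fixes S F :: "'a::group_add set"
  assumes "finite S" "symmetric_set S" and "finite F"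
  shows "card (cay_boundary S F) = (\<Sum>a\<in>F. card {s\<in>S. a + s \<notin> F})"
proof -
  let ?edge = "\<lambda>(a, s). {a, a + s}"
  let ?leaving = "SIGMA a:F. {s\<in>S. a + s \<notin> F}"
  have "cay_boundary S F = ?edge ` ?leaving"
  proof
    show "cay_boundary S F \<subseteq> ?edge ` ?leaving"
    proof
      fix e assume "e \<in> cay_boundary S F"
      then obtain g s where e: "e = {g, g + s}" "s \<in> S"
        and crossing: "(g \<in> F \<and> g + s \<notin> F) \<or> (g \<notin> F \<and> g + s \<in> F)"
        unfolding cay_boundary_def by blast
      show "e \<in> ?edge ` ?leaving"
      proof (cases "g \<in> F")
        case True
        then show ?thesis using e crossing by force
      next
        case False
        have "- s \<in> S" using assms(2) e(2) unfolding symmetric_set_def by blast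
        moreover have "e = {g + s, g + s + - s}"
          using e(1) by (simp add: add.assoc insert_commute)
        ultimately show ?thesis using False crossing
          by (intro image_eqI[where x = "(g + s, - s)"]) (auto simp: add.assoc)
      qed
    qed
    show "?edge ` ?leaving \<subseteq> cay_boundary S F"
      by (auto simp: cay_boundary_def)
  qed
  moreover have "inj_on ?edge ?leaving"
    by (rule inj_onI) (auto simp: doubleton_eq_iff)
  ultimately show ?thesis
    using assms(1,3) by (simp add: card_image card_SigmaI)
qed

lemma sum_indicator_translate:
  fixes S F :: "'a::group_add set"
  assumes "finite F"
  shows "(\<Sum>b\<in>F. indicator S (- a + b) :: real) = card {s\<in>S. a + s \<in> F}"
proof -
  have "(\<Sum>b\<in>F. indicator S (- a + b) :: real) = card {b\<in>F. - a + b \<in> S}"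
    using assms by (simp add: indicator_def sum.If_cases Int_def)
  also have "{b\<in>F. - a + b \<in> S} = (\<lambda>s. a + s) ` {s\<in>S. a + s \<in> F}"
    by (auto simp: image_iff add.assoc[symmetric] intro!: exI[where x = "- a + _"])
  also have "card \<dots> = card {s\<in>S. a + s \<in> F}"
    by (rule card_image) (simp add: inj_on_def)
  finally show ?thesis .
qed

lemma mean_indicator_eq_card_minus_boundary:
  fixes S F :: "'a::group_add set"
  assumes "finite S" "symmetric_set S" and "finite F" "F \<noteq> {}"
  shows "(1 / real (card F)) * (\<Sum>a\<in>F. \<Sum>b\<in>F. cmod (indicator S (- a + b) :: complex))
     = real (card S) - real (card (cay_boundary S F)) / real (card F)"
proof -
  have split: "card {s\<in>S. a + s \<in> F} + card {s\<in>S. a + s \<notin> F} = card S" for a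
    using assms(1) by (subst card_Un_disjoint[symmetric]) (auto intro: arg_cong[where f = card])
  have "(\<Sum>a\<in>F. \<Sum>b\<in>F. cmod (indicator S (- a + b) :: complex))
      = (\<Sum>a\<in>F. \<Sum>b\<in>F. indicator S (- a + b) :: real)"
    by (intro sum.cong) (auto simp: indicator_def)
  also have "\<dots> = (\<Sum>a\<in>F. real (card {s\<in>S. a + s \<in> F}))"
    using assms(3) by (simp add: sum_indicator_translate)
  also have "\<dots> = real (card F) * real (card S) - real (card (cay_boundary S F))"
  proof -
    have "(\<Sum>a\<in>F. card {s\<in>S. a + s \<in> F}) + card (cay_boundary S F) = card F * card S"
      by (simp add: card_cay_boundary[OF assms(1-3)] split flip: sum.distrib)
    then show ?thesis
      by (simp add: algebra_simps flip: of_nat_sum of_nat_mult of_nat_add)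
  qed
  finally show ?thesis
    using assms(3,4) by (simp add: field_simps)
qed

lemma expansion_mult_card:
  fixes S :: "'a::group_add set"
  assumes "finite S"
  shows "expansion S * real (card S) = real (card S) - cheeger S"
proof (cases "S = {}")
  case True
  have "cheeger S = 0"
    unfolding cheeger_def True cay_boundary_def
    by (simp add: cINF_const[of "{F. finite F \<and> F \<noteq> {}}"] exI[of _ "{0}"])
  then show ?thesis using True by simp
next
  case False
  then show ?thesis using assms by (simp add: expansion_def field_simps)
qed

theorem proposition4p2:
  fixes S :: "'a::group_add set"
  assumes "finite S" and "symmetric_set S"
  shows "Nprime (indicator S :: 'a \<Rightarrow> complex) = ereal (expansion S * real (card S))"
proof -
  define A where "A = {F::'a set. finite F \<and> F \<noteq> {}}"
  define ratio where "ratio F = real (card (cay_boundary S F)) / real (card F)" for F :: "'a set"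
  have "A \<noteq> {}" unfolding A_def by (auto intro!: exI[where x = "{0}"])
  have "bdd_below (ratio ` A)" "bdd_above ((\<lambda>F. real (card S) - ratio F) ` A)"
    unfolding ratio_def by (auto intro!: bdd_belowI[of _ 0] bdd_aboveI[of _ "real (card S)"])
  have "Nprime (indicator S :: 'a \<Rightarrow> complex) = (SUP F\<in>A. ereal (real (card S) - ratio F))"
    unfolding Nprime_def A_def[symmetric]
    by (intro SUP_cong refl arg_cong[where f = ereal])
      (use mean_indicator_eq_card_minus_boundary[OF assms] in \<open>auto simp: A_def ratio_def\<close>)
  also have "\<dots> = ereal (SUP F\<in>A. real (card S) - ratio F)"
    using ereal_cSUP \<open>A \<noteq> {}\<close> \<open>bdd_above _\<close> by metis
  also have "\<dots> = ereal (real (card S) - cheeger S)"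
    using cSUP_const_minus[OF \<open>A \<noteq> {}\<close> \<open>bdd_below _\<close>]
    by (simp add: cheeger_def A_def ratio_def)
  finally show ?thesis
    by (simp add: expansion_mult_card assms(1))
qed

end
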